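(* Let $k\ge 1$ and let $H_{2^k}$ be the Sylvester–Hadamard matrix of order $2^k$, with rows and columns indexed by $0,1,\ldots,2^k-1$; denote its $r$-th row by $H_{2^k}^{(r)}$. For an integer $j=\sum_{i=0}^{k-1}j_i2^i$ with $j_i\in\{0,1\}$ and $0\le j\le 2^k-1$, put $z_j=(j_0,j_1,\ldots,j_{k-1})\in\mathbb{F}_2^k$. Let $W=(w_0,w_1,\ldots,w_{2^k-1})$ with $w_i\in\{1,-1\}$ for all $i$. Then $W=\pm H_{2^k}^{(r)}$ for some $r\in\{0,\ldots,2^k-1\}$ if and only if for any four distinct integers $j,c,l,v\in\{0,\ldots,2^k-1\}$ with $z_j\oplus z_c\oplus z_l\oplus z_v=\mathbf{0}$ we have $w_jw_c=w_lw_v$.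
   Context: The Sylvester–Hadamard matrix is defined recursively by $H_1=(1)$, $H_2=\begin{pmatrix}1&1\\1&-1\end{pmatrix}$ and $H_{2^k}=\begin{pmatrix}H_{2^{k-1}}&H_{2^{k-1}}\\H_{2^{k-1}}&-H_{2^{k-1}}\end{pmatrix}$. Equivalently, $H_{2^k}^{(r)}=((-1)^{z_0\cdot z_r},(-1)^{z_1\cdot z_r},\ldots,(-1)^{z_{2^k-1}\cdot z_r})$, where $\cdot$ is the dot product on $\mathbb{F}_2^k$. *)

theory Defs
  imports Main
begin

text \<open>Sylvester--Hadamard matrix of order 2^k, entries indexed by r, c in {0..<2^k},
  defined by the block recursion H_{2^(k+1)} = [[H, H], [H, -H]].\<close>
fun sylvester :: "nat \<Rightarrow> nat \<Rightarrow> nat \<Rightarrow> int" where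
  "sylvester 0 r c = 1"
| "sylvester (Suc k) r c =
     (let h = sylvester k (r mod 2^k) (c mod 2^k)
      in if r \<ge> 2^k \<and> c \<ge> 2^k then - h else h)"

definition zvec :: "nat \<Rightarrow> nat \<Rightarrow> nat \<Rightarrow> bool" where
  "zvec k j i = (i < k \<and> odd (j div 2^i))"

end

theory Submission
  imports Defs
begin

text \<open>Identify z_j with its support, a subset of {..<k}. Addition in F_2^k becomes symmetric
  difference and the dot product z_r . z_c becomes the parity of the intersection, so the rows of
  the Sylvester--Hadamard matrix are the characters S |-> (-1)^|R \<inter> S| of the group
  (Pow {..<k}, symmetric difference). Applied to the quadruple (0, j XOR c, j, c), the condition
  says that j |-> w_0 w_j is a homomorphism from this group into {1, -1}, and such a homomorphism
  is the character of the set of singletons it sends to -1.\<close>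

definition character :: "'a set \<Rightarrow> 'a set \<Rightarrow> int" where
  "character R S = (-1) ^ card (R \<inter> S)"

lemma neg_one_power_card_sym_diff:
  assumes "finite X" "finite Y"
  shows "(-1::int) ^ card (sym_diff X Y) = (-1) ^ card X * (-1) ^ card Y"
proof -
  have X: "card X = card (X - Y) + card (X \<inter> Y)"
    using assms by (metis card_Diff_subset_Int card_mono le_add_diff_inverse2 Int_lower1 finite_Int)
  have Y: "card Y = card (Y - X) + card (X \<inter> Y)"
    using assms by (metis card_Diff_subset_Int card_mono le_add_diff_inverse2 Int_lower2 finite_Int inf.commute)
  have XY: "card (sym_diff X Y) = card (X - Y) + card (Y - X)"
    using assms by (simp add: card_Un_disjoint Diff_Int_distrib2 disjoint_iff)
  have "((-1::int) ^ card (X \<inter> Y))\<^sup>2 = 1"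
    by (simp add: power_even_eq flip: power_mult)
  then show ?thesis
    unfolding X Y XY by (simp add: power_add power_mult_distrib)
qed

lemma character_sym_diff:
  assumes "finite S" "finite T"
  shows "character R (sym_diff S T) = character R S * character R T"
proof -
  have "R \<inter> sym_diff S T = sym_diff (R \<inter> S) (R \<inter> T)"
    by auto
  then show ?thesis
    unfolding character_def using neg_one_power_card_sym_diff[of "R \<inter> S" "R \<inter> T"] assms by simp
qed

lemma character_singleton: "character R {i} = (if i \<in> R then -1 else 1)"
  by (simp add: character_def)

lemma sym_diff_hom_eq_character:
  fixes G :: "'a set \<Rightarrow> int"
  assumes "finite A"
    and sign: "\<And>S. S \<subseteq> A \<Longrightarrow> G S \<in> {1, -1}"
    and hom: "\<And>S T. S \<subseteq> A \<Longrightarrow> T \<subseteq> A \<Longrightarrow> G (sym_diff S T) = G S * G T"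
    and "S \<subseteq> A"
  shows "G S = character {i \<in> A. G {i} = -1} S"
proof -
  let ?R = "{i \<in> A. G {i} = -1}"
  have "G {} = G {} * G {}"
    using hom[of "{}" "{}"] by simp
  with sign[of "{}"] have G_empty: "G {} = 1"
    by auto
  from \<open>S \<subseteq> A\<close> have "finite S"
    using \<open>finite A\<close> finite_subset by blast
  then show ?thesis
    using \<open>S \<subseteq> A\<close>
  proof (induction S rule: finite_induct)
    case empty
    then show ?case
      by (simp add: G_empty character_def)
  next
    case (insert x F)
    have split: "sym_diff {x} F = insert x F"
      using insert.hyps by auto
    have "G (insert x F) = G {x} * G F"
      using hom[of "{x}" F] insert.prems unfolding split by simp
    also have "G {x} = character ?R {x}"
      using sign[of "{x}"] insert.prems by (auto simp: character_singleton)
    also have "G F = character ?R F"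
      using insert.IH insert.prems by simp
    also have "character ?R {x} * character ?R F = character ?R (insert x F)"
      using character_sym_diff[of "{x}" F ?R] insert.hyps unfolding split by simp
    finally show ?case .
  qed
qed

definition zsupp :: "nat \<Rightarrow> nat \<Rightarrow> nat set" where
  "zsupp k j = {i. zvec k j i}"

lemma zsupp_subset: "zsupp k j \<subseteq> {..<k}"
  by (auto simp: zsupp_def zvec_def)

lemma finite_zsupp [simp]: "finite (zsupp k j)"
  using zsupp_subset finite_subset by blast

lemma zsupp_0 [simp]: "zsupp k 0 = {}"
  by (simp add: zsupp_def zvec_def)

lemma inj_on_zsupp: "inj_on (zsupp k) {..<2^k}"
proof
  fix a b
  assume a: "a \<in> {..<2^k}" and b: "b \<in> {..<2^k}" and eq: "zsupp k a = zsupp k b"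
  have "bit a n = bit b n" for n
  proof (cases "n < k")
    case True
    then show ?thesis
      using eq unfolding zsupp_def zvec_def set_eq_iff bit_iff_odd by auto
  next
    case False
    then have "(2::nat) ^ k \<le> 2 ^ n"
      by simp
    then have "a < 2 ^ n" "b < 2 ^ n"
      using a b by (auto intro: less_le_trans)
    then have "a div 2 ^ n = 0" "b div 2 ^ n = 0"
      by simp_all
    then show ?thesis
      by (simp add: bit_iff_odd)
  qed
  then show "a = b"
    by (simp add: bit_eq_iff)
qed

lemma bij_betw_zsupp: "bij_betw (zsupp k) {..<2^k} (Pow {..<k})"
proof -
  have "zsupp k ` {..<2^k} = Pow {..<k}"
  proof (rule card_subset_eq)
    show "zsupp k ` {..<2^k} \<subseteq> Pow {..<k}"
      using zsupp_subset by auto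
    show "card (zsupp k ` {..<2^k}) = card (Pow {..<k})"
      using inj_on_zsupp by (simp add: card_image card_Pow)
  qed simp
  then show ?thesis
    using inj_on_zsupp by (simp add: bij_betw_def)
qed

lemma zsupp_Suc:
  assumes "r < 2 ^ Suc k"
  shows "zsupp (Suc k) r = zsupp k (r mod 2^k) \<union> (if r \<ge> 2^k then {k} else {})"
proof -
  have "r div 2^k < 2"
    using assms by (simp add: less_mult_imp_div_less mult.commute)
  moreover have "r \<ge> 2^k \<Longrightarrow> r div 2^k > 0"
    by (simp add: div_greater_zero_iff)
  ultimately have top: "odd (r div 2^k) \<longleftrightarrow> r \<ge> 2^k"
    by (cases "r \<ge> 2^k") auto
  have low: "odd ((r mod 2^k) div 2^i) = odd (r div 2^i)" if "i < k" for i
    using that by (metis bit_iff_odd bit_take_bit_iff take_bit_eq_mod)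
  show ?thesis
    unfolding zsupp_def zvec_def using top low by (auto simp: less_Suc_eq)
qed

lemma sylvester_eq_character:
  "r < 2^k \<Longrightarrow> c < 2^k \<Longrightarrow> sylvester k r c = character (zsupp k r) (zsupp k c)"
proof (induction k arbitrary: r c)
  case 0
  then show ?case
    by (simp add: character_def)
next
  case (Suc k)
  let ?r = "r mod 2^k" and ?c = "c mod 2^k"
  have IH: "sylvester k ?r ?c = character (zsupp k ?r) (zsupp k ?c)"
    by (rule Suc.IH) auto
  have k_notin: "k \<notin> zsupp k x" for x
    using zsupp_subset by blast
  have "zsupp (Suc k) r \<inter> zsupp (Suc k) c =
      (zsupp k ?r \<inter> zsupp k ?c) \<union> (if r \<ge> 2^k \<and> c \<ge> 2^k then {k} else {})"
    using zsupp_Suc[OF Suc.prems(1)] zsupp_Suc[OF Suc.prems(2)] k_notin by auto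
  then show ?case
    using IH k_notin by (auto simp: Let_def character_def)
qed

lemma zvec_sum_eq_zero_iff:
  "(\<forall>i < k. ((zvec k j i \<noteq> zvec k c i) \<noteq> (zvec k l i \<noteq> zvec k v i)) = False) \<longleftrightarrow>
   sym_diff (zsupp k j) (zsupp k c) = sym_diff (zsupp k l) (zsupp k v)"
  by (auto simp: zsupp_def zvec_def set_eq_iff)

definition quadruple_condition :: "nat \<Rightarrow> (nat \<Rightarrow> int) \<Rightarrow> bool" where
  "quadruple_condition k w \<longleftrightarrow>
     (\<forall>j c l v. j < 2^k \<and> c < 2^k \<and> l < 2^k \<and> v < 2^k \<and> distinct [j, c, l, v] \<and>
        sym_diff (zsupp k j) (zsupp k c) = sym_diff (zsupp k l) (zsupp k v)
        \<longrightarrow> w j * w c = w l * w v)"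

lemma sylvester_row_quadruple:
  assumes "r < 2^k" "j < 2^k" "c < 2^k" "l < 2^k" "v < 2^k"
    and "sym_diff (zsupp k j) (zsupp k c) = sym_diff (zsupp k l) (zsupp k v)"
  shows "sylvester k r j * sylvester k r c = sylvester k r l * sylvester k r v"
  using assms character_sym_diff[of "zsupp k j" "zsupp k c" "zsupp k r"]
    character_sym_diff[of "zsupp k l" "zsupp k v" "zsupp k r"]
  by (simp add: sylvester_eq_character)

lemma quadruple_condition_xor:
  assumes cond: "quadruple_condition k w"
    and sign: "\<forall>i < 2^k. w i = 1 \<or> w i = -1"
    and "j < 2^k" "c < 2^k" "d < 2^k"
    and d: "zsupp k d = sym_diff (zsupp k j) (zsupp k c)"
  shows "w 0 * w d = w j * w c"
proof -
  have zsupp_eq: "x = y \<longleftrightarrow> zsupp k x = zsupp k y" if "x < 2^k" "y < 2^k" for x y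
    using inj_on_zsupp that by (auto dest: inj_onD)
  have sq: "w x * w x = 1" if "x < 2^k" for x
    using sign that by auto
  consider "j = 0" | "c = 0" | "j = c" | "j \<noteq> 0" "c \<noteq> 0" "j \<noteq> c"
    by blast
  then show ?thesis
  proof cases
    case 1
    then have "d = c"
      using d zsupp_eq assms(4,5) by simp
    with 1 show ?thesis
      by simp
  next
    case 2
    then have "d = j"
      using d zsupp_eq assms(3,5) by simp
    with 2 show ?thesis
      by (simp add: mult.commute)
  next
    case 3
    then have "d = 0"
      using d zsupp_eq assms(5) by simp
    with 3 show ?thesis
      using sq assms(3) by simp
  next
    case 4
    have "zsupp k j \<noteq> {}" "zsupp k c \<noteq> {}" "zsupp k j \<noteq> zsupp k c"
      using 4 zsupp_eq[of j 0] zsupp_eq[of c 0] zsupp_eq[of j c] assms(3,4) by auto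
    with d have "zsupp k d \<noteq> {}" "zsupp k d \<noteq> zsupp k j" "zsupp k d \<noteq> zsupp k c"
      by auto
    then have "distinct [0, d, j, c]"
      using 4 zsupp_eq[of d 0] zsupp_eq[of d j] zsupp_eq[of d c] assms(3-5) by auto
    then show ?thesis
      using cond assms(3-5) d unfolding quadruple_condition_def by simp
  qed
qed

lemma quadruple_condition_imp_sylvester_row:
  assumes cond: "quadruple_condition k w"
    and sign: "\<forall>i < 2^k. w i = 1 \<or> w i = -1"
  shows "\<exists>r < 2^k. \<forall>i < 2^k. w i = w 0 * sylvester k r i"
proof -
  define N where "N = inv_into {..<2^k} (zsupp k)"
  have N: "N S < 2^k" "zsupp k (N S) = S" if "S \<subseteq> {..<k}" for S
  proof -
    have S: "S \<in> zsupp k ` {..<2^k}"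
      using bij_betw_zsupp that by (auto simp: bij_betw_def)
    show "N S < 2^k" "zsupp k (N S) = S"
      using inv_into_into[OF S] f_inv_into_f[OF S] unfolding N_def by auto
  qed
  have N_zsupp: "N (zsupp k i) = i" if "i < 2^k" for i
    using inj_on_zsupp that by (simp add: N_def)
  have w0_sq: "w 0 * w 0 = 1"
    using sign[rule_format, of 0] by auto
  define G where "G S = w 0 * w (N S)" for S
  have G_sign: "G S \<in> {1, -1}" if "S \<subseteq> {..<k}" for S
    using sign[rule_format, of 0] sign[rule_format, OF N(1)[OF that]] unfolding G_def by auto
  have G_hom: "G (sym_diff S T) = G S * G T" if "S \<subseteq> {..<k}" "T \<subseteq> {..<k}" for S T
  proof -
    have "sym_diff S T \<subseteq> {..<k}"
      using that by auto
    then have "w 0 * w (N (sym_diff S T)) = w (N S) * w (N T)"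
      using quadruple_condition_xor[OF cond sign, of "N S" "N T" "N (sym_diff S T)"] N that by simp
    with w0_sq show ?thesis
      unfolding G_def by (metis mult.assoc mult.left_commute mult_1)
  qed
  define R where "R = {i \<in> {..<k}. G {i} = -1}"
  have R: "R \<subseteq> {..<k}"
    by (auto simp: R_def)
  show ?thesis
  proof (intro exI conjI allI impI)
    show "N R < 2^k"
      using N R by blast
    fix i :: nat
    assume i: "i < 2^k"
    have "w 0 * w i = G (zsupp k i)"
      by (simp add: G_def N_zsupp i)
    also have "\<dots> = character R (zsupp k i)"
      unfolding R_def using sym_diff_hom_eq_character[OF _ G_sign G_hom] zsupp_subset by blast
    also have "\<dots> = sylvester k (N R) i"
      using sylvester_eq_character[OF N(1)[OF R] i] N(2)[OF R] by simp
    finally have "w 0 * w i = sylvester k (N R) i" .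
    with w0_sq show "w i = w 0 * sylvester k (N R) i"
      by (metis mult.assoc mult_1)
  qed
qed

theorem lemma1:
  fixes k :: nat and w :: "nat \<Rightarrow> int"
  assumes "k \<ge> 1"
    and "\<forall>i < 2^k. w i = 1 \<or> w i = -1"
  shows "(\<exists>r < 2^k. \<exists>s \<in> {1, -1::int}. \<forall>i < 2^k. w i = s * sylvester k r i)
     \<longleftrightarrow>
     (\<forall>j c l v. j < 2^k \<and> c < 2^k \<and> l < 2^k \<and> v < 2^k \<and>
        distinct [j, c, l, v] \<and>
        (\<forall>i < k. ((zvec k j i \<noteq> zvec k c i) \<noteq> (zvec k l i \<noteq> zvec k v i)) = False)
        \<longrightarrow> w j * w c = w l * w v)"
  unfolding zvec_sum_eq_zero_iff quadruple_condition_def [symmetric]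
proof
  assume "\<exists>r < 2^k. \<exists>s \<in> {1, -1::int}. \<forall>i < 2^k. w i = s * sylvester k r i"
  then obtain r s where r: "r < 2^k" and s: "s \<in> {1, -1}"
    and w: "\<forall>i < 2^k. w i = s * sylvester k r i"
    by blast
  show "quadruple_condition k w"
    unfolding quadruple_condition_def
    using sylvester_row_quadruple[OF r] w s by (auto simp: algebra_simps)
next
  assume "quadruple_condition k w"
  then obtain r where "r < 2^k" "\<forall>i < 2^k. w i = w 0 * sylvester k r i"
    using quadruple_condition_imp_sylvester_row assms(2) by blast
  moreover have "w 0 \<in> {1, -1}"
    using assms(2)[rule_format, of 0] by auto
  ultimately show "\<exists>r < 2^k. \<exists>s \<in> {1, -1::int}. \<forall>i < 2^k. w i = s * sylvester k r i"
    by blast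
qed

end
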